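(* Let $M$ and $M'$ be matroids on ground sets $E,E'$ with $E\cap E'=\{p\}$, where $p$ is a coloop of neither $M$ nor $M'$. Then $f(\operatorname{Ser}(M,M'))\le f(M)+f(M')$. Moreover, if $M$ has two disjoint bases neither of which contains $p$, then $f(\operatorname{Ser}(M,M'))\le\min\bigl(f(M),f(M')\bigr)$.
   Context: The series connection $\operatorname{Ser}(M,M')$ is the matroid on $E\cup E'$ whose bases are the sets $B\cup B'$ with $B$ a basis of $M$, $B'$ a basis of $M'$, and $B\cap B'=\varnothing$. For a matroid $M$, $\mathcal{B}(M)$ denotes its set of bases, and the distance between two bases $B,B'$ is $|B\triangle B'|$; $\operatorname{diam}$ denotes diameter. The Borsuk number $f(M)$ is the minimum number of parts in a partition of $\mathcal{B}(M)$ in which every part has diameter strictly smaller than $\operatorname{diam}(\mathcal{B}(M))$; if $M$ has exactly one basis, $f(M):=+\infty$. *)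

theory Defs
  imports Main "HOL-Library.Extended_Nat"
begin

definition matroid_bases :: "'a set \<Rightarrow> 'a set set \<Rightarrow> bool" where
  "matroid_bases E \<B> \<longleftrightarrow> finite E \<and> \<B> \<noteq> {} \<and> (\<forall>B\<in>\<B>. B \<subseteq> E) \<and>
     (\<forall>B1\<in>\<B>. \<forall>B2\<in>\<B>. \<forall>x\<in>B1 - B2. \<exists>y\<in>B2 - B1. insert y (B1 - {x}) \<in> \<B>)"

definition coloop :: "'a set set \<Rightarrow> 'a \<Rightarrow> bool" where
  "coloop \<B> p \<longleftrightarrow> (\<forall>B\<in>\<B>. p \<in> B)"

definition ser_bases :: "'a set set \<Rightarrow> 'a set set \<Rightarrow> 'a set set" where
  "ser_bases \<B> \<B>' = {B \<union> B' | B B'. B \<in> \<B> \<and> B' \<in> \<B>' \<and> B \<inter> B' = {}}"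

definition basis_dist :: "'a set \<Rightarrow> 'a set \<Rightarrow> nat" where
  "basis_dist B B' = card ((B - B') \<union> (B' - B))"

definition diam :: "'a set set \<Rightarrow> nat" where
  "diam \<B> = Max {basis_dist B B' | B B'. B \<in> \<B> \<and> B' \<in> \<B>}"

definition borsuk_partition :: "'a set set \<Rightarrow> 'a set set set \<Rightarrow> bool" where
  "borsuk_partition \<B> P \<longleftrightarrow> finite P \<and> \<Union>P = \<B> \<and> {} \<notin> P \<and>
     (\<forall>X\<in>P. \<forall>Y\<in>P. X \<noteq> Y \<longrightarrow> X \<inter> Y = {}) \<and> (\<forall>X\<in>P. diam X < diam \<B>)"

definition borsuk :: "'a set set \<Rightarrow> enat" where
  "borsuk \<B> = (if card \<B> = 1 then \<infinity>
     else (INF P \<in> {P. borsuk_partition \<B> P}. enat (card P)))"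

end

theory Submission
  imports Defs
begin

(* Every basis of Ser(M,M') splits as B \<union> B' with B, B' bases of M, M', and distances are
   subadditive along this splitting; as E \<inter> E' = {p}, they are additive up to the contribution
   of p.  If M has a diametral pair of bases avoiding p (two disjoint bases are such a pair),
   joining it with a diametral pair of M' gives diam Ser(M,M') \<ge> diam M + diam M', so an
   optimal partition of either factor pulls back along the splitting.  Otherwise
   diam Ser(M,M') \<ge> diam M + diam M' - 2, and since distances between bases are even, a part of
   an admissible partition of M has diameter at most diam M - 2.  On the bases of Ser(M,M') whose
   M-part contains p the M'-parts avoid p, hence are at distance below diam M', and the partition
   of M pulls back; on the others the partition of M' pulls back. *)

lemma basis_dist_commute: "basis_dist A B = basis_dist B A"
  unfolding basis_dist_def by (simp add: Un_commute)

lemma basis_dist_set_eq: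
  "{basis_dist B B' | B B'. B \<in> X \<and> B' \<in> X} = case_prod basis_dist ` (X \<times> X)"
  by auto

lemma basis_dist_le_diam: "finite X \<Longrightarrow> A \<in> X \<Longrightarrow> B \<in> X \<Longrightarrow> basis_dist A B \<le> diam X"
  unfolding diam_def basis_dist_set_eq by (rule Max_ge) auto

lemma diam_attained:
  assumes "finite X" "X \<noteq> {}"
  obtains A B where "A \<in> X" "B \<in> X" "basis_dist A B = diam X"
proof -
  have "diam X \<in> case_prod basis_dist ` (X \<times> X)"
    unfolding diam_def basis_dist_set_eq using assms by (intro Max_in) auto
  then show ?thesis using that by auto
qed

lemma diam_less:
  assumes "finite X" "X \<noteq> {}" "\<And>A B. A \<in> X \<Longrightarrow> B \<in> X \<Longrightarrow> basis_dist A B < d"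
  shows "diam X < d"
  using diam_attained[OF assms(1,2)] assms(3) by metis

lemma basis_dist_Un_le:
  assumes "finite A" "finite B" "finite A'" "finite B'"
  shows "basis_dist (A \<union> A') (B \<union> B') \<le> basis_dist A B + basis_dist A' B'"
proof -
  have "basis_dist (A \<union> A') (B \<union> B') \<le> card (sym_diff A B \<union> sym_diff A' B')"
    unfolding basis_dist_def using assms by (intro card_mono) auto
  also have "\<dots> \<le> basis_dist A B + basis_dist A' B'"
    unfolding basis_dist_def by (rule card_Un_le)
  finally show ?thesis .
qed

lemma basis_dist_Un_ge:
  assumes "finite A" "finite B" "finite A'" "finite B'" "finite K"
    and "(A \<union> B) \<inter> (A' \<union> B') \<subseteq> K"
  shows "basis_dist A B + basis_dist A' B' \<le> basis_dist (A \<union> A') (B \<union> B') + 2 * card K"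
proof -
  define D D' where "D = sym_diff A B - K" and "D' = sym_diff A' B' - K"
  have card_le: "card X \<le> card (X - K) + card K" if "finite X" for X
  proof -
    have "card X \<le> card (X - K \<union> K)" using that assms(5) by (intro card_mono) auto
    also have "\<dots> \<le> card (X - K) + card K" by (rule card_Un_le)
    finally show ?thesis .
  qed
  have "basis_dist A B \<le> card D + card K" "basis_dist A' B' \<le> card D' + card K"
    unfolding basis_dist_def D_def D'_def using assms(1-4) by (auto intro: card_le)
  moreover have "card D + card D' = card (D \<union> D')"
    using assms unfolding D_def D'_def by (intro card_Un_disjoint [symmetric]) auto
  moreover have "card (D \<union> D') \<le> basis_dist (A \<union> A') (B \<union> B')"
    unfolding basis_dist_def D_def D'_def using assms by (intro card_mono) auto
  ultimately show ?thesis by linarith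
qed

definition borsuk_coloring :: "'a set set \<Rightarrow> ('a set \<Rightarrow> 'c) \<Rightarrow> bool" where
  "borsuk_coloring \<B> c \<longleftrightarrow> (\<forall>A\<in>\<B>. \<forall>B\<in>\<B>. c A = c B \<longrightarrow> basis_dist A B < diam \<B>)"

lemma borsuk_le_card_image:
  assumes "finite \<B>" "borsuk_coloring \<B> c"
  shows "borsuk \<B> \<le> enat (card (c ` \<B>))"
proof -
  define P where "P = (\<lambda>i. {B \<in> \<B>. c B = i}) ` c ` \<B>"
  have "diam X < diam \<B>" if X: "X \<in> P" for X
  proof -
    obtain B0 where "B0 \<in> \<B>" "X = {B \<in> \<B>. c B = c B0}" using X unfolding P_def by blast
    then show ?thesis using assms by (intro diam_less) (auto simp: borsuk_coloring_def)
  qed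
  then have "borsuk_partition \<B> P"
    unfolding borsuk_partition_def P_def using assms(1) by auto
  moreover have "card \<B> \<noteq> 1"
  proof
    assume "card \<B> = 1"
    then obtain B where "\<B> = {B}" by (rule card_1_singletonE)
    then show False using assms(2) by (simp add: borsuk_coloring_def diam_def basis_dist_def)
  qed
  ultimately have "borsuk \<B> \<le> enat (card P)"
    unfolding borsuk_def by (auto intro: INF_lower)
  also have "card P \<le> card (c ` \<B>)"
    unfolding P_def using assms(1) by (intro card_image_le) simp
  finally show ?thesis by simp
qed

lemma borsuk_coloring_exists:
  assumes "finite \<B>" "borsuk \<B> \<noteq> \<infinity>"
  obtains c :: "'a set \<Rightarrow> 'a set set"
    where "borsuk_coloring \<B> c" "enat (card (c ` \<B>)) \<le> borsuk \<B>"
proof -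
  let ?sizes = "(\<lambda>P. enat (card P)) ` {P. borsuk_partition \<B> P}"
  have borsuk_eq: "borsuk \<B> = Inf ?sizes"
    using assms(2) unfolding borsuk_def by (simp split: if_splits)
  have "?sizes \<noteq> {}"
  proof
    assume "?sizes = {}"
    then have "borsuk \<B> = \<infinity>" using borsuk_eq by (simp add: top_enat_def)
    with assms(2) show False ..
  qed
  then have "Inf ?sizes \<in> ?sizes" by (metis wellorder_InfI ex_in_conv)
  then obtain P where P: "borsuk_partition \<B> P" "borsuk \<B> = enat (card P)"
    unfolding borsuk_eq by blast
  define c where "c B = (SOME X. X \<in> P \<and> B \<in> X)" for B
  have c: "c B \<in> P \<and> B \<in> c B" if "B \<in> \<B>" for B
  proof -
    have "\<exists>X. X \<in> P \<and> B \<in> X" using P(1) that unfolding borsuk_partition_def by blast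
    then show ?thesis unfolding c_def by (rule someI_ex)
  qed
  have "borsuk_coloring \<B> c"
    unfolding borsuk_coloring_def
  proof (intro ballI impI)
    fix A B assume "A \<in> \<B>" "B \<in> \<B>" "c A = c B"
    then have "A \<in> c A" "B \<in> c A" "c A \<in> P" using c by metis+
    then have "c A \<subseteq> \<B>" "diam (c A) < diam \<B>"
      using P(1) unfolding borsuk_partition_def by auto
    moreover have "basis_dist A B \<le> diam (c A)"
      using \<open>c A \<subseteq> \<B>\<close> \<open>A \<in> c A\<close> \<open>B \<in> c A\<close> assms(1)
      by (intro basis_dist_le_diam) (auto intro: finite_subset)
    ultimately show "basis_dist A B < diam \<B>" by simp
  qed
  moreover have "card (c ` \<B>) \<le> card P"
    using P(1) c unfolding borsuk_partition_def by (intro card_mono) auto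
  ultimately show thesis using that P(2) by simp
qed

lemma borsuk_le_pullback:
  fixes S :: "'a set set" and \<B> :: "'b set set"
  assumes "finite S" "finite \<B>" "\<phi> ` S \<subseteq> \<B>"
    and "\<And>A B. A \<in> S \<Longrightarrow> B \<in> S \<Longrightarrow> basis_dist (\<phi> A) (\<phi> B) < diam \<B> \<Longrightarrow> basis_dist A B < diam S"
  shows "borsuk S \<le> borsuk \<B>"
proof (cases "borsuk \<B> = \<infinity>")
  case False
  then obtain c :: "'b set \<Rightarrow> 'b set set"
    where c: "borsuk_coloring \<B> c" "enat (card (c ` \<B>)) \<le> borsuk \<B>"
    using assms(2) borsuk_coloring_exists by blast
  have "borsuk_coloring S (c \<circ> \<phi>)"
    using c(1) assms(3,4) unfolding borsuk_coloring_def comp_def by (meson image_subset_iff)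
  then have "borsuk S \<le> enat (card ((c \<circ> \<phi>) ` S))"
    by (rule borsuk_le_card_image [OF assms(1)])
  also have "card ((c \<circ> \<phi>) ` S) \<le> card (c ` \<B>)"
    using assms(2,3) by (intro card_mono) (auto simp: image_comp [symmetric])
  finally show ?thesis using c(2) by simp
qed simp

lemma borsuk_le_add_pullback:
  fixes S :: "'a set set" and \<B>\<^sub>1 \<B>\<^sub>2 :: "'b set set"
  assumes "finite S" "finite \<B>\<^sub>1" "finite \<B>\<^sub>2"
    and "\<And>A. A \<in> S \<Longrightarrow> Q A \<Longrightarrow> \<phi>\<^sub>1 A \<in> \<B>\<^sub>1"
    and "\<And>A. A \<in> S \<Longrightarrow> \<not> Q A \<Longrightarrow> \<phi>\<^sub>2 A \<in> \<B>\<^sub>2"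
    and "\<And>A B. A \<in> S \<Longrightarrow> B \<in> S \<Longrightarrow> Q A \<Longrightarrow> Q B \<Longrightarrow>
      basis_dist (\<phi>\<^sub>1 A) (\<phi>\<^sub>1 B) < diam \<B>\<^sub>1 \<Longrightarrow> basis_dist A B < diam S"
    and "\<And>A B. A \<in> S \<Longrightarrow> B \<in> S \<Longrightarrow> \<not> Q A \<Longrightarrow> \<not> Q B \<Longrightarrow>
      basis_dist (\<phi>\<^sub>2 A) (\<phi>\<^sub>2 B) < diam \<B>\<^sub>2 \<Longrightarrow> basis_dist A B < diam S"
  shows "borsuk S \<le> borsuk \<B>\<^sub>1 + borsuk \<B>\<^sub>2"
proof (cases "borsuk \<B>\<^sub>1 = \<infinity> \<or> borsuk \<B>\<^sub>2 = \<infinity>")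
  case False
  obtain c\<^sub>1 :: "'b set \<Rightarrow> 'b set set"
    where c\<^sub>1: "borsuk_coloring \<B>\<^sub>1 c\<^sub>1" "enat (card (c\<^sub>1 ` \<B>\<^sub>1)) \<le> borsuk \<B>\<^sub>1"
    using assms(2) False borsuk_coloring_exists by blast
  obtain c\<^sub>2 :: "'b set \<Rightarrow> 'b set set"
    where c\<^sub>2: "borsuk_coloring \<B>\<^sub>2 c\<^sub>2" "enat (card (c\<^sub>2 ` \<B>\<^sub>2)) \<le> borsuk \<B>\<^sub>2"
    using assms(3) False borsuk_coloring_exists by blast
  define c where "c A = (if Q A then Inl (c\<^sub>1 (\<phi>\<^sub>1 A)) else Inr (c\<^sub>2 (\<phi>\<^sub>2 A)))" for A
  have "borsuk_coloring S c"
    using c\<^sub>1(1) c\<^sub>2(1) assms(4-7) unfolding borsuk_coloring_def c_def by auto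
  then have "borsuk S \<le> enat (card (c ` S))"
    by (rule borsuk_le_card_image [OF assms(1)])
  also have "card (c ` S) \<le> card (Inl ` c\<^sub>1 ` \<B>\<^sub>1 \<union> Inr ` c\<^sub>2 ` \<B>\<^sub>2)"
    using assms(2-5) by (intro card_mono) (auto simp: c_def)
  also have "\<dots> \<le> card (c\<^sub>1 ` \<B>\<^sub>1) + card (c\<^sub>2 ` \<B>\<^sub>2)"
    using card_Un_le [of "Inl ` c\<^sub>1 ` \<B>\<^sub>1" "Inr ` c\<^sub>2 ` \<B>\<^sub>2"]
    by (simp add: card_image inj_on_def)
  finally show ?thesis using c\<^sub>1(2) c\<^sub>2(2) add_mono by fastforce
qed auto

definition diametral_pair_avoiding :: "'a set set \<Rightarrow> 'a \<Rightarrow> bool" where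
  "diametral_pair_avoiding \<B> p \<longleftrightarrow>
     (\<exists>B1\<in>\<B>. \<exists>B2\<in>\<B>. p \<notin> B1 \<and> p \<notin> B2 \<and> basis_dist B1 B2 = diam \<B>)"

locale matroid =
  fixes E :: "'a set" and \<B> :: "'a set set"
  assumes matroid_bases: "matroid_bases E \<B>"
begin

lemma basis_subset: "B \<in> \<B> \<Longrightarrow> B \<subseteq> E"
  using matroid_bases unfolding matroid_bases_def by auto

lemma finite_ground: "finite E"
  using matroid_bases unfolding matroid_bases_def by simp

lemma finite_basis: "B \<in> \<B> \<Longrightarrow> finite B"
  using basis_subset finite_ground by (rule finite_subset)

lemma finite_bases: "finite \<B>"
proof -
  have "\<B> \<subseteq> Pow E" using basis_subset by blast
  then show ?thesis using finite_ground by (simp add: finite_subset)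
qed

lemma bases_nonempty: "\<B> \<noteq> {}"
  using matroid_bases unfolding matroid_bases_def by auto

lemma basis_exchange:
  "B1 \<in> \<B> \<Longrightarrow> B2 \<in> \<B> \<Longrightarrow> x \<in> B1 - B2 \<Longrightarrow> \<exists>y\<in>B2 - B1. insert y (B1 - {x}) \<in> \<B>"
  using matroid_bases unfolding matroid_bases_def by blast

lemma card_bases_le:
  assumes "B1 \<in> \<B>" "B2 \<in> \<B>"
  shows "card B1 \<le> card B2"
  using assms(1)
proof (induction "card (B1 - B2)" arbitrary: B1 rule: less_induct)
  case less
  show ?case
  proof (cases "B1 \<subseteq> B2")
    case True
    then show ?thesis using finite_basis [OF assms(2)] by (simp add: card_mono)
  next
    case False
    then obtain x where x: "x \<in> B1 - B2" by blast
    then obtain y where y: "y \<in> B2 - B1" and B3: "insert y (B1 - {x}) \<in> \<B>"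
      using basis_exchange less.prems assms(2) by blast
    have "insert y (B1 - {x}) - B2 = B1 - B2 - {x}" using x y by auto
    then have "card (insert y (B1 - {x}) - B2) < card (B1 - B2)"
      using x finite_basis [OF less.prems] by (metis card_Diff1_less finite_Diff)
    then have "card (insert y (B1 - {x})) \<le> card B2" using less.hyps B3 by blast
    moreover have "card (insert y (B1 - {x})) = card B1"
      using x y finite_basis [OF less.prems] card_gt_0_iff [of B1] by auto
    ultimately show ?thesis by simp
  qed
qed

lemma card_bases_eq: "B1 \<in> \<B> \<Longrightarrow> B2 \<in> \<B> \<Longrightarrow> card B1 = card B2"
  by (intro le_antisym card_bases_le)

lemma basis_dist_bases:
  assumes "B1 \<in> \<B>" "B2 \<in> \<B>"
  shows "basis_dist B1 B2 = 2 * card (B1 - B2)"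
proof -
  have "card (B1 - B2) = card (B2 - B1)"
    using assms card_bases_eq finite_basis by (metis Int_commute card_Diff_subset_Int finite_Int)
  then show ?thesis
    unfolding basis_dist_def using assms finite_basis by (subst card_Un_disjoint) auto
qed

lemma basis_dist_add_two_le_diam:
  assumes "B1 \<in> \<B>" "B2 \<in> \<B>" "basis_dist B1 B2 < diam \<B>"
  shows "basis_dist B1 B2 + 2 \<le> diam \<B>"
proof -
  obtain A B where "A \<in> \<B>" "B \<in> \<B>" "basis_dist A B = diam \<B>"
    using diam_attained [OF finite_bases bases_nonempty] .
  then have "diam \<B> = 2 * card (A - B)" using basis_dist_bases by simp
  moreover have "basis_dist B1 B2 = 2 * card (B1 - B2)" using assms(1,2) by (rule basis_dist_bases)
  ultimately show ?thesis using assms(3) by presburger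
qed

lemma basis_dist_less_diam_if_not_avoiding:
  assumes "\<not> diametral_pair_avoiding \<B> p" "B1 \<in> \<B>" "B2 \<in> \<B>" "p \<notin> B1" "p \<notin> B2"
  shows "basis_dist B1 B2 < diam \<B>"
  using assms basis_dist_le_diam [OF finite_bases assms(2,3)]
  unfolding diametral_pair_avoiding_def by fastforce

lemma disjoint_bases_diametral:
  assumes "B1 \<in> \<B>" "B2 \<in> \<B>" "B1 \<inter> B2 = {}"
  shows "basis_dist B1 B2 = diam \<B>"
proof -
  obtain A B where AB: "A \<in> \<B>" "B \<in> \<B>" "basis_dist A B = diam \<B>"
    using diam_attained [OF finite_bases bases_nonempty] .
  have "card (A - B) \<le> card B1"
    using AB card_bases_eq [OF AB(1) assms(1)] finite_basis by (metis Diff_subset card_mono)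
  then have "diam \<B> \<le> basis_dist B1 B2"
    using AB assms basis_dist_bases by (simp add: Diff_triv)
  then show ?thesis using basis_dist_le_diam [OF finite_bases assms(1,2)] by simp
qed

lemma diametral_pair_with_one_avoiding:
  assumes "\<not> coloop \<B> p"
  obtains B1 B2 where "B1 \<in> \<B>" "B2 \<in> \<B>" "basis_dist B1 B2 = diam \<B>" "p \<notin> B2"
proof -
  obtain A B where AB: "A \<in> \<B>" "B \<in> \<B>" "basis_dist A B = diam \<B>"
    using diam_attained [OF finite_bases bases_nonempty] .
  obtain B3 where B3: "B3 \<in> \<B>" "p \<notin> B3"
    using assms unfolding coloop_def by blast
  consider "p \<notin> B" | "p \<notin> A" | "p \<in> A" "p \<in> B" by blast
  then show thesis
  proof cases
    case 1
    then show thesis using that AB by blast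
  next
    case 2
    then show thesis using that AB basis_dist_commute by metis
  next
    case 3
    then obtain y where y: "y \<in> B3 - B" and B4: "insert y (B - {p}) \<in> \<B>"
      using basis_exchange [OF AB(2) B3(1)] B3(2) by blast
    \<comment> \<open>exchanging p, which lies in A, out of B does not bring B closer to A\<close>
    have "B - A \<subseteq> insert y (B - {p}) - A" using 3 by auto
    then have "card (B - A) \<le> card (insert y (B - {p}) - A)"
      using finite_basis [OF B4] by (intro card_mono) auto
    have "diam \<B> = 2 * card (B - A)"
      using AB(3) basis_dist_bases [OF AB(2,1)] basis_dist_commute [of A B] by simp
    also have "\<dots> \<le> 2 * card (insert y (B - {p}) - A)"
      using \<open>card (B - A) \<le> card (insert y (B - {p}) - A)\<close> by simp
    also have "\<dots> = basis_dist A (insert y (B - {p}))"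
      using basis_dist_bases [OF B4 AB(1)] basis_dist_commute [of A] by simp
    finally have "basis_dist A (insert y (B - {p})) = diam \<B>"
      using basis_dist_le_diam [OF finite_bases AB(1) B4] by simp
    moreover have "p \<notin> insert y (B - {p})" using y B3(2) by auto
    ultimately show thesis using that AB(1) B4 by blast
  qed
qed

end

lemma ser_bases_commute: "ser_bases \<B> \<B>' = ser_bases \<B>' \<B>"
  unfolding ser_bases_def by blast

locale series_connection = M: matroid E \<B> + M': matroid E' \<B>' for E \<B> E' \<B>' +
  fixes p :: 'a
  assumes ground_Int: "E \<inter> E' \<subseteq> {p}"
begin

abbreviation "S \<equiv> ser_bases \<B> \<B>'"

lemma bases_Int_subset: "B \<in> \<B> \<Longrightarrow> B' \<in> \<B>' \<Longrightarrow> B \<inter> B' \<subseteq> {p}"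
  using M.basis_subset M'.basis_subset ground_Int by blast

lemma Un_in_ser_bases: "B \<in> \<B> \<Longrightarrow> B' \<in> \<B>' \<Longrightarrow> p \<notin> B \<or> p \<notin> B' \<Longrightarrow> B \<union> B' \<in> S"
  using bases_Int_subset unfolding ser_bases_def by blast

lemma finite_ser_bases: "finite S"
proof -
  have "S \<subseteq> Pow (E \<union> E')"
    unfolding ser_bases_def using M.basis_subset M'.basis_subset by blast
  then show ?thesis
    using M.finite_ground M'.finite_ground by (simp add: finite_subset)
qed

lemma ser_bases_split:
  obtains \<phi> \<phi>' where
    "\<And>C. C \<in> S \<Longrightarrow> \<phi> C \<in> \<B> \<and> \<phi>' C \<in> \<B>' \<and> \<phi> C \<inter> \<phi>' C = {} \<and> C = \<phi> C \<union> \<phi>' C"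
    "\<And>A B. A \<in> S \<Longrightarrow> B \<in> S \<Longrightarrow>
      basis_dist A B \<le> basis_dist (\<phi> A) (\<phi> B) + basis_dist (\<phi>' A) (\<phi>' B)"
proof -
  have "\<forall>C\<in>S. \<exists>BB'. fst BB' \<in> \<B> \<and> snd BB' \<in> \<B>' \<and>
      fst BB' \<inter> snd BB' = {} \<and> C = fst BB' \<union> snd BB'"
    unfolding ser_bases_def by force
  then obtain f where f: "\<And>C. C \<in> S \<Longrightarrow> fst (f C) \<in> \<B> \<and> snd (f C) \<in> \<B>' \<and>
      fst (f C) \<inter> snd (f C) = {} \<and> C = fst (f C) \<union> snd (f C)"
    by metis
  moreover have
    "basis_dist A B \<le> basis_dist (fst (f A)) (fst (f B)) + basis_dist (snd (f A)) (snd (f B))"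
    if "A \<in> S" "B \<in> S" for A B
    using f [OF that(1)] f [OF that(2)] basis_dist_Un_le M.finite_basis M'.finite_basis by metis
  ultimately show thesis using that [of "fst \<circ> f" "snd \<circ> f"] by simp
qed

lemma diam_ser_ge_if_avoiding:
  assumes "diametral_pair_avoiding \<B> p"
  shows "diam \<B> + diam \<B>' \<le> diam S"
proof -
  obtain B1 B2 where B: "B1 \<in> \<B>" "B2 \<in> \<B>" "p \<notin> B1" "p \<notin> B2" "basis_dist B1 B2 = diam \<B>"
    using assms unfolding diametral_pair_avoiding_def by blast
  obtain B1' B2' where B': "B1' \<in> \<B>'" "B2' \<in> \<B>'" "basis_dist B1' B2' = diam \<B>'"
    using diam_attained [OF M'.finite_bases M'.bases_nonempty] .
  have "(B1 \<union> B2) \<inter> (B1' \<union> B2') \<subseteq> {}"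
    using B B' bases_Int_subset by blast
  then have "basis_dist B1 B2 + basis_dist B1' B2' \<le> basis_dist (B1 \<union> B1') (B2 \<union> B2')"
    using basis_dist_Un_ge [of B1 B2 B1' B2' "{}"] B B' M.finite_basis M'.finite_basis by simp
  also have "\<dots> \<le> diam S"
    using B B' by (intro basis_dist_le_diam finite_ser_bases Un_in_ser_bases) auto
  finally show ?thesis using B(5) B'(3) by simp
qed

lemma diam_ser_ge_if_not_avoiding:
  assumes "\<not> coloop \<B> p" "\<not> coloop \<B>' p"
    and "\<not> diametral_pair_avoiding \<B> p" "\<not> diametral_pair_avoiding \<B>' p"
  shows "diam \<B> + diam \<B>' \<le> diam S + 2"
proof -
  obtain B1 B2 where B: "B1 \<in> \<B>" "B2 \<in> \<B>" "basis_dist B1 B2 = diam \<B>" "p \<notin> B2"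
    using M.diametral_pair_with_one_avoiding [OF assms(1)] .
  with assms(3) have "p \<in> B1" unfolding diametral_pair_avoiding_def by blast
  obtain B1' B2' where B': "B1' \<in> \<B>'" "B2' \<in> \<B>'" "basis_dist B1' B2' = diam \<B>'" "p \<notin> B2'"
    using M'.diametral_pair_with_one_avoiding [OF assms(2)] .
  with assms(4) have "p \<in> B1'" unfolding diametral_pair_avoiding_def by blast
  have "(B1 \<union> B2) \<inter> (B2' \<union> B1') \<subseteq> {p}"
    using B B' bases_Int_subset by blast
  then have "basis_dist B1 B2 + basis_dist B2' B1' \<le> basis_dist (B1 \<union> B2') (B2 \<union> B1') + 2"
    using basis_dist_Un_ge [of B1 B2 B2' B1' "{p}"] B B' M.finite_basis M'.finite_basis by simp
  also have "basis_dist (B1 \<union> B2') (B2 \<union> B1') \<le> diam S"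
    using B B' by (intro basis_dist_le_diam finite_ser_bases Un_in_ser_bases) auto
  finally show ?thesis using B(3) B'(3) basis_dist_commute [of B2' B1'] by simp
qed

lemma borsuk_ser_le_left:
  assumes "diam \<B> + diam \<B>' \<le> diam S"
  shows "borsuk S \<le> borsuk \<B>"
proof -
  obtain \<phi> \<phi>' where split:
      "\<And>C. C \<in> S \<Longrightarrow> \<phi> C \<in> \<B> \<and> \<phi>' C \<in> \<B>' \<and> \<phi> C \<inter> \<phi>' C = {} \<and> C = \<phi> C \<union> \<phi>' C"
    and split_dist: "\<And>A B. A \<in> S \<Longrightarrow> B \<in> S \<Longrightarrow>
      basis_dist A B \<le> basis_dist (\<phi> A) (\<phi> B) + basis_dist (\<phi>' A) (\<phi>' B)"
    using ser_bases_split by blast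
  show ?thesis
  proof (rule borsuk_le_pullback [OF finite_ser_bases M.finite_bases])
    show "\<phi> ` S \<subseteq> \<B>" using split by blast
  next
    fix A B assume "A \<in> S" "B \<in> S" "basis_dist (\<phi> A) (\<phi> B) < diam \<B>"
    moreover have "basis_dist (\<phi>' A) (\<phi>' B) \<le> diam \<B>'"
      using split \<open>A \<in> S\<close> \<open>B \<in> S\<close> by (blast intro: basis_dist_le_diam M'.finite_bases)
    ultimately show "basis_dist A B < diam S"
      using split_dist assms by fastforce
  qed
qed

lemma borsuk_ser_le_add:
  assumes "\<not> coloop \<B> p" "\<not> coloop \<B>' p"
    and "\<not> diametral_pair_avoiding \<B> p" "\<not> diametral_pair_avoiding \<B>' p"
  shows "borsuk S \<le> borsuk \<B> + borsuk \<B>'"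
proof -
  obtain \<phi> \<phi>' where split:
      "\<And>C. C \<in> S \<Longrightarrow> \<phi> C \<in> \<B> \<and> \<phi>' C \<in> \<B>' \<and> \<phi> C \<inter> \<phi>' C = {} \<and> C = \<phi> C \<union> \<phi>' C"
    and split_dist: "\<And>A B. A \<in> S \<Longrightarrow> B \<in> S \<Longrightarrow>
      basis_dist A B \<le> basis_dist (\<phi> A) (\<phi> B) + basis_dist (\<phi>' A) (\<phi>' B)"
    using ser_bases_split by blast
  have both_small: "basis_dist A B < diam S"
    if "A \<in> S" "B \<in> S"
      and "basis_dist (\<phi> A) (\<phi> B) < diam \<B>" "basis_dist (\<phi>' A) (\<phi>' B) < diam \<B>'"
    for A B
  proof -
    have "basis_dist (\<phi> A) (\<phi> B) + 2 \<le> diam \<B>"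
      using that split M.basis_dist_add_two_le_diam by blast
    moreover have "basis_dist (\<phi>' A) (\<phi>' B) + 2 \<le> diam \<B>'"
      using that split M'.basis_dist_add_two_le_diam by blast
    ultimately show ?thesis
      using split_dist [OF that(1,2)] diam_ser_ge_if_not_avoiding [OF assms] by linarith
  qed
  show ?thesis
  proof (rule borsuk_le_add_pullback [OF finite_ser_bases M.finite_bases M'.finite_bases,
        where Q = "\<lambda>C. p \<in> \<phi> C" and \<phi>\<^sub>1 = \<phi> and \<phi>\<^sub>2 = \<phi>'])
    fix A B assume AB: "A \<in> S" "B \<in> S" "p \<in> \<phi> A" "p \<in> \<phi> B"
      and "basis_dist (\<phi> A) (\<phi> B) < diam \<B>"
    moreover have "basis_dist (\<phi>' A) (\<phi>' B) < diam \<B>'"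
      using AB split by (blast intro: M'.basis_dist_less_diam_if_not_avoiding [OF assms(4)])
    ultimately show "basis_dist A B < diam S" using both_small by blast
  next
    fix A B assume AB: "A \<in> S" "B \<in> S" "p \<notin> \<phi> A" "p \<notin> \<phi> B"
      and "basis_dist (\<phi>' A) (\<phi>' B) < diam \<B>'"
    moreover have "basis_dist (\<phi> A) (\<phi> B) < diam \<B>"
      using AB split by (blast intro: M.basis_dist_less_diam_if_not_avoiding [OF assms(3)])
    ultimately show "basis_dist A B < diam S" using both_small by blast
  qed (use split in blast)+
qed

end

theorem proposition4p4:
  fixes E E' :: "'a set" and \<B> \<B>' :: "'a set set" and p :: 'a
  assumes "matroid_bases E \<B>" and "matroid_bases E' \<B>'"
    and "E \<inter> E' = {p}"
    and "\<not> coloop \<B> p" and "\<not> coloop \<B>' p"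
  shows "borsuk (ser_bases \<B> \<B>') \<le> borsuk \<B> + borsuk \<B>'
    \<and> ((\<exists>B1\<in>\<B>. \<exists>B2\<in>\<B>. B1 \<inter> B2 = {} \<and> p \<notin> B1 \<and> p \<notin> B2)
         \<longrightarrow> borsuk (ser_bases \<B> \<B>') \<le> min (borsuk \<B>) (borsuk \<B>'))"
proof -
  interpret ser: series_connection E \<B> E' \<B>' p
    using assms(1-3) by unfold_locales auto
  interpret ser_swap: series_connection E' \<B>' E \<B> p
    using assms(1-3) by unfold_locales auto
  have le_min: "borsuk (ser_bases \<B> \<B>') \<le> min (borsuk \<B>) (borsuk \<B>')"
    if "diametral_pair_avoiding \<B> p"
    using ser.diam_ser_ge_if_avoiding [OF that] ser.borsuk_ser_le_left
      ser_swap.borsuk_ser_le_left ser_bases_commute [of \<B>' \<B>] by (simp add: add.commute)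
  have le_right: "borsuk (ser_bases \<B> \<B>') \<le> borsuk \<B>'" if "diametral_pair_avoiding \<B>' p"
    using ser_swap.diam_ser_ge_if_avoiding [OF that] ser_swap.borsuk_ser_le_left
      ser_bases_commute [of \<B>' \<B>] by simp
  have "borsuk (ser_bases \<B> \<B>') \<le> borsuk \<B> + borsuk \<B>'"
  proof (cases "diametral_pair_avoiding \<B> p \<or> diametral_pair_avoiding \<B>' p")
    case True
    then show ?thesis using le_min le_right by (auto intro: add_increasing add_increasing2)
  next
    case False
    then show ?thesis using ser.borsuk_ser_le_add assms(4,5) by blast
  qed
  moreover have "diametral_pair_avoiding \<B> p"
    if "\<exists>B1\<in>\<B>. \<exists>B2\<in>\<B>. B1 \<inter> B2 = {} \<and> p \<notin> B1 \<and> p \<notin> B2"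
    using that ser.M.disjoint_bases_diametral unfolding diametral_pair_avoiding_def by blast
  ultimately show ?thesis using le_min by blast
qed

end
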